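(* Let $\alpha\in(1,2)$ and $\beta=1-\log_2\alpha\in(0,1)$, and let $s=\beta/2$. The Riesz operator $\widetilde{\mathcal R}^\beta$, i.e. convolution on $\mathbb{Z}_2$ by $\tilde k^\beta(x)=\frac{2}{\zeta(\beta)}|x|_2^{\beta-1}$, extends to a continuous linear operator from $H^{-s}(\mathbb{Z}_2)$ onto $H^{s}(\mathbb{Z}_2)$.
   Context: $\mathbb{Z}_2$ is the ring of 2-adic integers, $|\cdot|_2$ the 2-adic absolute value, $\mu$ the Haar probability measure on $\mathbb{Z}_2$. $\zeta(\beta)=(1-2^{-\beta})^{-1}$. Convolution on $\mathbb{Z}_2$: $(\tilde k^\beta\star f)(a)=\int_{\mathbb{Z}_2}\tilde k^\beta(a-x)f(x)\,d\mu(x)$. $\Lambda=\mathbb{Q}_2/\mathbb{Z}_2$; for $f$ on $\mathbb{Z}_2$ and $\lambda\in\Lambda$, $\mathcal F(f)(\lambda)=\int_{\mathbb{Z}_2}e^{-2i\pi\lambda x}f(x)\,d\mu(x)$. For $t\in\mathbb{R}$, $H^t(\mathbb{Z}_2)$ is the completion of the space of locally constant functions on $\mathbb{Z}_2$ for the norm $\|f\|_{H^t(\mathbb{Z}_2)}=\big(\sum_{\lambda\in\Lambda}(1+|\lambda|_2)^{2t}|\mathcal F(f)(\lambda)|^2\big)^{1/2}$. *)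

theory Defs
  imports "HOL-Probability.Probability"
begin

text \<open>2-adic integers are represented by their binary digit sequences:
  x :: nat \<Rightarrow> bool, with x i the i-th binary digit, i.e. x = sum of 2^i over {i. x i}.\<close>

type_synonym Z2 = "nat \<Rightarrow> bool"

definition z2_res :: "Z2 \<Rightarrow> nat \<Rightarrow> int" where
  "z2_res x n = (\<Sum>i<n. if x i then 2 ^ i else 0)"

text \<open>Subtraction in Z_2, digit by digit: the i-th digit of x - y is the i-th binary digit of
  (x - y) mod 2^(i+1).\<close>
definition z2_sub :: "Z2 \<Rightarrow> Z2 \<Rightarrow> Z2" where
  "z2_sub x y = (\<lambda>i. odd (((z2_res x (Suc i) - z2_res y (Suc i)) mod 2 ^ Suc i) div 2 ^ i))"

definition z2_abs :: "Z2 \<Rightarrow> real" where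
  "z2_abs x = (if (\<forall>i. \<not> x i) then 0 else (1/2) ^ (LEAST i. x i))"

definition haar :: "Z2 measure" where
  "haar = (\<Pi>\<^sub>M i\<in>(UNIV::nat set). measure_pmf (bernoulli_pmf (1/2)))"

text \<open>Locally constant functions on Z_2 (the balls of Z_2 are the cylinders given by
  prescribing the first n digits).\<close>
definition locally_constant :: "(Z2 \<Rightarrow> 'b) \<Rightarrow> bool" where
  "locally_constant f \<longleftrightarrow> (\<forall>x. \<exists>n. \<forall>y. (\<forall>i<n. y i = x i) \<longrightarrow> f y = f x)"

text \<open>Lambda = Q_2/Z_2, represented by the dyadic rationals in [0,1).\<close>
definition Lambda :: "rat set" where
  "Lambda = {q. 0 \<le> q \<and> q < 1 \<and> (\<exists>n::nat. \<exists>k::int. q = of_int k / 2 ^ n)}"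

text \<open>2-adic absolute value on Lambda: |k/2^n|_2 = 2^n for k odd, and |0|_2 = 0.\<close>
definition lam_abs :: "rat \<Rightarrow> real" where
  "lam_abs q = (if q = 0 then 0 else real_of_int (snd (quotient_of q)))"

definition lam_exp :: "rat \<Rightarrow> nat" where
  "lam_exp q = (LEAST n::nat. \<exists>k::int. q = of_int k / 2 ^ n)"

text \<open>The character x \<mapsto> exp(-2 i pi lambda x); for lambda = k/2^n it only depends on x mod 2^n.\<close>
definition chr :: "rat \<Rightarrow> Z2 \<Rightarrow> complex" where
  "chr q x = cis (- 2 * pi * real_of_rat q * real_of_int (z2_res x (lam_exp q)))"

definition fourier :: "(Z2 \<Rightarrow> complex) \<Rightarrow> rat \<Rightarrow> complex" where
  "fourier f q = (if q \<in> Lambda then integral\<^sup>L haar (\<lambda>x. chr q x * f x) else 0)"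

text \<open>H^t(Z_2), realized (isometrically, via the Fourier transform) as the weighted l^2 space
  on Lambda, which is the completion of the locally constant functions for the H^t norm.\<close>
definition H_norm :: "real \<Rightarrow> (rat \<Rightarrow> complex) \<Rightarrow> real" where
  "H_norm t c = sqrt (\<Sum>\<^sub>\<infinity>q\<in>Lambda. (1 + lam_abs q) powr (2 * t) * (cmod (c q))\<^sup>2)"

definition H_space :: "real \<Rightarrow> (rat \<Rightarrow> complex) set" where
  "H_space t = {c. (\<forall>q. q \<notin> Lambda \<longrightarrow> c q = 0) \<and>
      (\<lambda>q. (1 + lam_abs q) powr (2 * t) * (cmod (c q))\<^sup>2) summable_on Lambda}"

definition zeta2 :: "real \<Rightarrow> real" where
  "zeta2 \<beta> = 1 / (1 - 2 powr (- \<beta>))"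

definition riesz_kernel :: "real \<Rightarrow> Z2 \<Rightarrow> real" where
  "riesz_kernel \<beta> x = 2 / zeta2 \<beta> * z2_abs x powr (\<beta> - 1)"

definition conv :: "(Z2 \<Rightarrow> real) \<Rightarrow> (Z2 \<Rightarrow> complex) \<Rightarrow> Z2 \<Rightarrow> complex" where
  "conv k f a = integral\<^sup>L haar (\<lambda>x. complex_of_real (k (z2_sub a x)) * f x)"

end

theory Submission
  imports Defs
begin

text \<open>The characters chr q are eigenfunctions of convolution with the radial kernel. On the
  sphere of radius 2^-j around x the kernel is constant, and if q has denominator 2^n the
  integral of chr q over a ball of radius 2^-j vanishes for j < n, because flipping digit n - 1
  changes the sign of chr q and preserves the Haar measure. Summing the resulting geometric
  series gives the eigenvalue m q = 1 for q = 0 and m q = (2 - 2^\<beta>) |q|^-\<beta> otherwise.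
  The kernel is a probability density and locally constant functions are bounded, so Fubini
  turns this into F(R f) = m F(f). Since m^2 is comparable to (1 + |q|)^(-2\<beta>), multiplication
  by m is a bounded bijection from the weighted l^2 space of H^-s onto that of H^s, s = \<beta>/2.\<close>

section \<open>Haar measure on Z_2\<close>

abbreviation fair_coin :: "bool measure" where
  "fair_coin \<equiv> measure_pmf (bernoulli_pmf (1/2))"

lemma compact_UNIV_Z2: "compact (UNIV :: Z2 set)"
proof -
  have "compact_space (euclidean :: bool topology)"
    by (simp add: compact_space_def finite_imp_compact)
  then have "compact_space (product_topology (\<lambda>i::nat. euclidean :: bool topology) UNIV)"
    by (simp add: compact_space_product_topology)
  then show ?thesis
    by (simp add: euclidean_product_topology compact_space_def)
qed

definition cylinder :: "Z2 \<Rightarrow> nat \<Rightarrow> Z2 set" where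
  "cylinder x n = {a. \<forall>i<n. a i = x i}"

lemma open_cylinder: "open (cylinder x n)"
proof -
  have "open {f::Z2. \<forall>i\<in>{..<n}. f (id i) \<in> {x i}}"
    by (rule product_topology_basis') (auto intro: discrete_topology_class.open_discrete)
  moreover have "{f::Z2. \<forall>i\<in>{..<n}. f (id i) \<in> {x i}} = cylinder x n"
    by (auto simp: cylinder_def)
  ultimately show ?thesis by simp
qed

text \<open>The bound on the number of digits is uniform by compactness of Z_2.\<close>
lemma locally_constant_uniform:
  assumes "locally_constant f"
  obtains N where "\<And>x y. (\<forall>i<N. x i = y i) \<Longrightarrow> f x = f y"
proof -
  from assms obtain n where n: "\<And>x y. (\<forall>i<n x. y i = x i) \<Longrightarrow> f y = f x"
    unfolding locally_constant_def by metis
  have "UNIV \<subseteq> (\<Union>x. cylinder x (n x))" by (auto simp: cylinder_def)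
  then obtain K where K: "finite K" "UNIV \<subseteq> (\<Union>x\<in>K. cylinder x (n x))"
    using compactE_image[OF compact_UNIV_Z2, of UNIV "\<lambda>x. cylinder x (n x)"]
    by (auto simp: open_cylinder)
  have "f y = f z" if "\<forall>i<(\<Sum>x\<in>K. n x). y i = z i" for y z
  proof -
    obtain x where x: "x \<in> K" "y \<in> cylinder x (n x)" using K by blast
    have "n x \<le> (\<Sum>x\<in>K. n x)" using K(1) x(1) by (simp add: member_le_sum)
    then have "z \<in> cylinder x (n x)" using x that by (auto simp: cylinder_def)
    then show ?thesis using x n by (auto simp: cylinder_def)
  qed
  then show ?thesis using that by blast
qed

lemma space_haar [simp]: "space haar = UNIV"
  by (simp add: haar_def space_PiM)

interpretation coins: product_prob_space "\<lambda>_::nat. fair_coin" UNIV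
  by unfold_locales

lemma prob_space_haar: "prob_space haar"
  unfolding haar_def by (rule coins.prob_space_axioms)

interpretation haar: prob_space haar
  by (rule prob_space_haar)

interpretation haar2: pair_sigma_finite haar haar
  by (simp add: pair_sigma_finite_def prob_space_imp_sigma_finite prob_space_haar)

lemma measurable_digit [measurable]: "(\<lambda>a. a i) \<in> measurable haar (count_space UNIV)"
proof -
  have "(\<lambda>a. a i) \<in> measurable haar fair_coin"
    unfolding haar_def by (rule measurable_component_singleton) simp
  then show ?thesis by (simp add: measurable_cong_sets)
qed

lemma ennreal_half_power: "(1/2::ennreal) ^ n = ennreal ((1/2) ^ n)"
proof -
  have half: "(1/2::ennreal) = ennreal (1/2)"
    by (metis divide_ennreal ennreal_1 ennreal_numeral zero_le_one zero_less_numeral)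
  show ?thesis by (subst (1) half) (rule ennreal_power, simp)
qed

lemma emeasure_haar_digits:
  assumes "finite J"
  shows "emeasure haar {a. \<forall>i\<in>J. a i = b i} = (1/2) ^ card J"
proof -
  have "emeasure haar {a\<in>space haar. \<forall>i\<in>J. a i \<in> {b i}} = (\<Prod>i\<in>J. emeasure fair_coin {b i})"
    unfolding haar_def by (rule coins.emeasure_PiM_Collect) (use assms in auto)
  moreover have "emeasure fair_coin {c} = 1/2" for c
    by (cases c) (simp_all add: emeasure_pmf_single ennreal_minus divide_ennreal_def)
  ultimately show ?thesis by (simp add: ennreal_power)
qed

lemma cylinder_sets [measurable]: "cylinder x n \<in> sets haar"
proof -
  have "Measurable.pred haar (\<lambda>a. \<forall>i\<in>{..<n}. a i = x i)" by measurable
  moreover have "cylinder x n = {a \<in> space haar. \<forall>i\<in>{..<n}. a i = x i}"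
    by (auto simp: cylinder_def)
  ultimately show ?thesis by (simp add: pred_def)
qed

lemma measure_cylinder: "measure haar (cylinder x n) = (1/2) ^ n"
proof -
  have "emeasure haar (cylinder x n) = (1/2) ^ n"
    using emeasure_haar_digits[of "{..<n}" x] by (simp add: cylinder_def lessThan_def)
  then show ?thesis by (simp add: haar.emeasure_eq_measure ennreal_half_power)
qed

definition flip_digit :: "nat \<Rightarrow> Z2 \<Rightarrow> Z2" where
  "flip_digit m a = a(m := \<not> a m)"

lemma flip_digit_same [simp]: "flip_digit m a m = (\<not> a m)"
  and flip_digit_other [simp]: "i \<noteq> m \<Longrightarrow> flip_digit m a i = a i"
  by (simp_all add: flip_digit_def)

lemma measurable_flip_digit [measurable]: "flip_digit m \<in> measurable haar haar"
proof -
  have "flip_digit m \<in> measurable haar (\<Pi>\<^sub>M i\<in>UNIV. fair_coin)"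
  proof (rule measurable_PiM_single')
    fix i :: nat
    have "Measurable.pred haar (\<lambda>a. if i = m then \<not> a m else a i)" by measurable
    then have "(\<lambda>a. flip_digit m a i) \<in> measurable haar (count_space UNIV)"
      by (simp add: pred_def flip_digit_def)
    then show "(\<lambda>a. flip_digit m a i) \<in> measurable haar fair_coin"
      by (simp add: measurable_cong_sets)
  qed (simp add: space_PiM)
  then show ?thesis by (simp add: haar_def)
qed

lemma emeasure_fair_coin_Not: "emeasure fair_coin (Not ` A) = emeasure fair_coin A"
proof -
  have "pmf (bernoulli_pmf (1/2)) b = 1/2" for b
    by (cases b) simp_all
  then have "(\<Sum>b\<in>Not ` A. pmf (bernoulli_pmf (1/2)) b) = (\<Sum>b\<in>A. pmf (bernoulli_pmf (1/2)) b)"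
    by (subst sum.reindex) (simp_all add: inj_on_def)
  then show ?thesis
    by (simp add: emeasure_measure_pmf_finite)
qed

text \<open>The digits are independent fair coins, and flipping a fair coin preserves its law.\<close>
lemma distr_flip_digit: "distr haar haar (flip_digit m) = haar"
proof -
  have "distr haar haar (flip_digit m) = (\<Pi>\<^sub>M i\<in>UNIV. fair_coin)"
  proof (rule coins.PiM_eq)
    show "sets (distr haar haar (flip_digit m)) = sets (\<Pi>\<^sub>M i\<in>UNIV. fair_coin)"
      by (simp add: haar_def)
  next
    fix J :: "nat set" and F assume J: "finite J" "J \<subseteq> UNIV" and F: "\<And>j. j \<in> J \<Longrightarrow> F j \<in> sets fair_coin"
    define F' where "F' j = (if j = m then Not ` F j else F j)" for j
    have "b \<in> Not ` B \<longleftrightarrow> (\<not> b) \<in> B" for b B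
      by force
    then have "flip_digit m a j \<in> F j \<longleftrightarrow> a j \<in> F' j" for a j
      by (cases "j = m") (simp_all add: F'_def)
    then have pre: "flip_digit m -` prod_emb UNIV (\<lambda>_. fair_coin) J (Pi\<^sub>E J F)
        = prod_emb UNIV (\<lambda>_. fair_coin) J (Pi\<^sub>E J F')"
      by (auto simp: prod_emb_iff PiE_iff)
    have "prod_emb UNIV (\<lambda>_. fair_coin) J (Pi\<^sub>E J F) \<in> sets haar"
      unfolding haar_def by (rule sets_PiM_I) (use J F in auto)
    then have "emeasure (distr haar haar (flip_digit m)) (prod_emb UNIV (\<lambda>_. fair_coin) J (Pi\<^sub>E J F))
        = emeasure haar (prod_emb UNIV (\<lambda>_. fair_coin) J (Pi\<^sub>E J F'))"
      by (simp add: emeasure_distr pre)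
    also have "\<dots> = (\<Prod>j\<in>J. emeasure fair_coin (F' j))"
      unfolding haar_def by (rule coins.emeasure_PiM_emb) (use J in auto)
    also have "\<dots> = (\<Prod>j\<in>J. emeasure fair_coin (F j))"
      by (intro prod.cong) (auto simp: F'_def emeasure_fair_coin_Not)
    finally show "emeasure (distr haar haar (flip_digit m)) (prod_emb UNIV (\<lambda>_. fair_coin) J (Pi\<^sub>E J F))
        = (\<Prod>j\<in>J. emeasure fair_coin (F j))" .
  qed
  then show ?thesis by (simp add: haar_def)
qed

lemma integral_flip_digit:
  fixes g :: "Z2 \<Rightarrow> 'b::{banach, second_countable_topology}"
  assumes "g \<in> borel_measurable haar"
  shows "(\<integral>a. g (flip_digit m a) \<partial>haar) = integral\<^sup>L haar g"
  using integral_distr[of "flip_digit m" haar haar g] assms by (simp add: distr_flip_digit)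

section \<open>Spheres and the Riesz kernel\<close>

definition z2_sphere :: "Z2 \<Rightarrow> nat \<Rightarrow> Z2 set" where
  "z2_sphere x j = {a. (\<forall>i<j. a i = x i) \<and> a j \<noteq> x j}"

lemma z2_sphere_unique: "a \<in> z2_sphere x j \<Longrightarrow> a \<in> z2_sphere x k \<Longrightarrow> j = k"
  unfolding z2_sphere_def by (cases j k rule: linorder_cases) auto

lemma z2_sphere_exists:
  assumes "a \<noteq> x"
  obtains j where "a \<in> z2_sphere x j"
proof -
  obtain i where i: "a i \<noteq> x i" using assms by (auto simp: fun_eq_iff)
  define d where "d = (LEAST i. a i \<noteq> x i)"
  have "a d \<noteq> x d" unfolding d_def using i by (rule LeastI)
  moreover have "\<forall>i<d. a i = x i" unfolding d_def by (auto dest: not_less_Least)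
  ultimately show ?thesis by (intro that) (simp add: z2_sphere_def)
qed

lemma z2_sphere_eq_cylinder_diff: "z2_sphere x j = cylinder x j - cylinder x (Suc j)"
  by (auto simp: z2_sphere_def cylinder_def less_Suc_eq)

lemma indicator_z2_sphere:
  "(indicator (z2_sphere x j) a :: 'b::ring_1) = indicator (cylinder x j) a - indicator (cylinder x (Suc j)) a"
  by (auto simp: indicator_def z2_sphere_def cylinder_def less_Suc_eq)

lemma z2_sphere_sets [measurable]: "z2_sphere x j \<in> sets haar"
  by (simp add: z2_sphere_eq_cylinder_diff)

lemma measure_z2_sphere: "measure haar (z2_sphere x j) = (1/2) ^ Suc j"
proof -
  have "cylinder x (Suc j) \<subseteq> cylinder x j" by (auto simp: cylinder_def)
  then show ?thesis
    by (simp add: z2_sphere_eq_cylinder_diff haar.finite_measure_Diff measure_cylinder)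
qed

lemma z2_res_Suc: "z2_res x (Suc n) = z2_res x n + (if x n then 2 ^ n else 0)"
  by (simp add: z2_res_def)

lemma z2_res_cong: "(\<And>i. i < n \<Longrightarrow> a i = x i) \<Longrightarrow> z2_res a n = z2_res x n"
  unfolding z2_res_def by (intro sum.cong) auto

lemma z2_sub_digits_below:
  assumes "a \<in> z2_sphere x j"
  shows "z2_sub a x j" and "i < j \<Longrightarrow> \<not> z2_sub a x i"
proof -
  have agree: "\<And>i. i < j \<Longrightarrow> a i = x i" and differ: "a j \<noteq> x j"
    using assms by (auto simp: z2_sphere_def)
  have "z2_res a j = z2_res x j" using agree by (rule z2_res_cong)
  moreover have "((2::int) ^ j) mod 2 ^ Suc j = 2 ^ j"
    by simp
  moreover then have "(- ((2::int) ^ j)) mod 2 ^ Suc j = 2 ^ j"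
    by (simp add: zmod_zminus1_eq_if)
  ultimately show "z2_sub a x j"
    using differ by (cases "a j") (simp_all add: z2_sub_def z2_res_Suc)
  assume "i < j"
  then have "z2_res a (Suc i) = z2_res x (Suc i)" using agree by (intro z2_res_cong) auto
  then show "\<not> z2_sub a x i" by (simp add: z2_sub_def)
qed

lemma z2_abs_z2_sub_self: "z2_abs (z2_sub x x) = 0"
  by (simp add: z2_abs_def z2_sub_def)

lemma z2_abs_z2_sub_sphere:
  assumes "a \<in> z2_sphere x j"
  shows "z2_abs (z2_sub a x) = (1/2) ^ j"
proof -
  have "(LEAST i. z2_sub a x i) = j"
    using z2_sub_digits_below[OF assms] by (intro Least_equality) (auto simp: not_less[symmetric])
  then show ?thesis using z2_sub_digits_below(1)[OF assms] by (auto simp: z2_abs_def)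
qed

definition riesz_level :: "real \<Rightarrow> nat \<Rightarrow> real" where
  "riesz_level \<beta> j = 2 / zeta2 \<beta> * ((1/2) ^ j) powr (\<beta> - 1)"

lemma riesz_kernel_sums:
  "(\<lambda>j. riesz_level \<beta> j * indicator (z2_sphere x j) a) sums riesz_kernel \<beta> (z2_sub a x)"
proof (cases "a = x")
  case True
  then show ?thesis by (simp add: z2_sphere_def riesz_kernel_def z2_abs_z2_sub_self)
next
  case False
  then obtain d where d: "a \<in> z2_sphere x d" by (rule z2_sphere_exists)
  then have "(\<lambda>j. riesz_level \<beta> j * indicator (z2_sphere x j) a) = (\<lambda>j. if j = d then riesz_level \<beta> d else 0)"
    using z2_sphere_unique by (auto simp: fun_eq_iff indicator_def)
  then show ?thesis
    using sums_single[of d "\<lambda>_. riesz_level \<beta> d"] d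
    by (simp add: riesz_kernel_def riesz_level_def z2_abs_z2_sub_sphere)
qed

lemma measurable_riesz_kernel_pair:
  "(\<lambda>p. riesz_kernel \<beta> (z2_sub (fst p) (snd p))) \<in> borel_measurable (haar \<Otimes>\<^sub>M haar)"
proof -
  have "Measurable.pred (haar \<Otimes>\<^sub>M haar) (\<lambda>p. (\<forall>i<j. fst p i = snd p i) \<and> fst p j \<noteq> snd p j)" for j
    by measurable
  then have "(\<lambda>p. \<Sum>j. riesz_level \<beta> j * indicator (z2_sphere (snd p) j) (fst p))
      \<in> borel_measurable (haar \<Otimes>\<^sub>M haar)"
    by (simp add: indicator_def z2_sphere_def)
  then show ?thesis
    by (simp add: sums_unique[OF riesz_kernel_sums, symmetric])
qed

section \<open>Characters\<close>

lemma lam_exp_le: "q = of_int k / 2 ^ n \<Longrightarrow> lam_exp q \<le> n"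
  unfolding lam_exp_def by (rule Least_le) blast

lemma lam_exp_0 [simp]: "lam_exp 0 = 0"
  using lam_exp_le[of 0 0 0] by simp

lemma Lambda_lam_exp:
  assumes "q \<in> Lambda"
  obtains k where "q = of_int k / 2 ^ lam_exp q"
proof -
  from assms have "\<exists>n. \<exists>k::int. q = of_int k / 2 ^ n" by (auto simp: Lambda_def)
  then have "\<exists>k::int. q = of_int k / 2 ^ lam_exp q" unfolding lam_exp_def by (rule LeastI_ex)
  with that show ?thesis by blast
qed

lemma Lambda_odd_numerator:
  assumes "q \<in> Lambda" "q \<noteq> 0"
  obtains k where "odd k" "q = of_int k / 2 ^ lam_exp q" and "0 < lam_exp q"
proof -
  obtain k where k: "q = of_int k / 2 ^ lam_exp q" using assms(1) by (rule Lambda_lam_exp)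
  have pos: "0 < lam_exp q"
  proof (rule ccontr)
    assume "\<not> 0 < lam_exp q"
    then have "q = of_int k" using k by simp
    moreover have "0 \<le> q" "q < 1" using assms(1) by (auto simp: Lambda_def)
    ultimately show False using assms(2) by auto
  qed
  have "odd k"
  proof
    assume "even k"
    then obtain k' where "k = 2 * k'" by blast
    moreover have "(2::rat) ^ lam_exp q = 2 * 2 ^ (lam_exp q - 1)"
      using pos by (metis Suc_diff_1 power_Suc)
    ultimately have "q = of_int k' / 2 ^ (lam_exp q - 1)" using k by simp
    then have "lam_exp q \<le> lam_exp q - 1" by (rule lam_exp_le)
    then show False using pos by simp
  qed
  then show ?thesis using k pos that by blast
qed

lemma lam_abs_eq_power:
  assumes "q \<in> Lambda" "q \<noteq> 0"
  shows "lam_abs q = 2 ^ lam_exp q"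
proof -
  obtain k where k: "odd k" "q = of_int k / 2 ^ lam_exp q"
    using assms by (rule Lambda_odd_numerator)
  then have "coprime k (2 ^ lam_exp q)" by (simp add: coprime_power_right_iff)
  moreover have "q = Fract k (2 ^ lam_exp q)" using k(2) by (simp add: Fract_of_int_quotient)
  ultimately have "quotient_of q = (k, 2 ^ lam_exp q)"
    by (metis quotient_of_Fract normalize_stable zero_less_numeral zero_less_power)
  then show ?thesis using assms(2) by (simp add: lam_abs_def)
qed

lemma chr_cong: "(\<And>i. i < lam_exp q \<Longrightarrow> a i = x i) \<Longrightarrow> chr q a = chr q x"
  unfolding chr_def by (simp add: z2_res_cong[of "lam_exp q" a x])

lemma norm_chr [simp]: "norm (chr q a) = 1"
  by (simp add: chr_def)

lemma chr_0 [simp]: "chr 0 a = 1"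
  by (simp add: chr_def)

lemma chr_measurable [measurable]: "chr q \<in> borel_measurable haar"
proof -
  have "real_of_int (z2_res a n) = (\<Sum>i<n. if a i then 2 ^ i else 0)" for a n
    unfolding z2_res_def of_int_sum by (intro sum.cong) auto
  then have "chr q = (\<lambda>a. cis (- 2 * pi * real_of_rat q * (\<Sum>i<lam_exp q. if a i then 2 ^ i else 0)))"
    by (simp add: chr_def fun_eq_iff)
  moreover have "(\<lambda>a. (\<Sum>i<lam_exp q. if a i then (2::real) ^ i else 0)) \<in> borel_measurable haar"
    by measurable
  then have "(\<lambda>a. cis (- 2 * pi * real_of_rat q * (\<Sum>i<lam_exp q. if a i then 2 ^ i else 0)))
      \<in> borel_measurable haar"
    by (intro borel_measurable_continuous_on[where f="\<lambda>y. cis (- 2 * pi * real_of_rat q * y)"])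
       (auto intro!: continuous_intros)
  ultimately show ?thesis by simp
qed

lemma z2_res_flip_digit:
  assumes "m < n"
  shows "z2_res (flip_digit m a) n = z2_res a n + (if a m then - 1 else 1) * 2 ^ m"
  using assms
proof (induction n)
  case (Suc n)
  show ?case
  proof (cases "n = m")
    case True
    have "z2_res (flip_digit m a) m = z2_res a m" by (rule z2_res_cong) simp
    then show ?thesis using True by (simp add: z2_res_Suc)
  next
    case False
    then show ?thesis using Suc by (simp add: z2_res_Suc)
  qed
qed simp

lemma cis_pi_odd: "odd k \<Longrightarrow> cis (pi * real_of_int k) = -1"
proof -
  assume "odd k"
  then obtain t where "k = 2 * t + 1" by (rule oddE)
  then have "cis (pi * real_of_int k) = cis (pi + 2 * pi * real_of_int t)"
    by (simp add: algebra_simps)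
  also have "\<dots> = cis pi * cis (2 * pi * real_of_int t)"
    by (rule cis_mult[symmetric])
  finally show ?thesis by (simp only: cis_pi cis_multiple_2pi Ints_of_int) simp
qed

text \<open>Flipping digit n - 1 shifts the phase of a character with denominator 2^n by an odd
  multiple of \<pi>.\<close>
lemma chr_flip_digit:
  assumes "q \<in> Lambda" "q \<noteq> 0"
  shows "chr q (flip_digit (lam_exp q - 1) a) = - chr q a"
proof -
  define n where "n = lam_exp q"
  obtain k where k: "odd k" "q = of_int k / 2 ^ n" and n: "0 < n"
    using assms unfolding n_def by (rule Lambda_odd_numerator)
  define \<sigma> :: int where "\<sigma> = (if a (n - 1) then - 1 else 1)"
  have "(2::real) ^ n = 2 * 2 ^ (n - 1)" using n by (metis Suc_diff_1 power_Suc)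
  moreover have "real_of_rat q = real_of_int k / 2 ^ n"
    using k(2) by (simp add: of_rat_divide of_rat_power)
  ultimately have phase: "- 2 * pi * real_of_rat q * real_of_int (\<sigma> * 2 ^ (n - 1)) = pi * real_of_int (- \<sigma> * k)"
    by (simp add: field_simps)
  have "z2_res (flip_digit (n - 1) a) n = z2_res a n + \<sigma> * 2 ^ (n - 1)"
    using n by (simp add: z2_res_flip_digit \<sigma>_def)
  then have "chr q (flip_digit (n - 1) a)
      = cis (- 2 * pi * real_of_rat q * real_of_int (z2_res a n) + pi * real_of_int (- \<sigma> * k))"
    unfolding chr_def n_def[symmetric] phase[symmetric] by (simp add: algebra_simps)
  also have "\<dots> = chr q a * cis (pi * real_of_int (- \<sigma> * k))"
    unfolding chr_def n_def[symmetric] by (rule cis_mult[symmetric])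
  also have "\<dots> = - chr q a"
    using k(1) cis_pi_odd[of "- \<sigma> * k"] by (simp add: \<sigma>_def)
  finally show ?thesis unfolding n_def .
qed

section \<open>Eigenvalues of the Riesz operator\<close>

definition chr_cylinder_mass :: "rat \<Rightarrow> nat \<Rightarrow> real" where
  "chr_cylinder_mass q j = (if lam_exp q \<le> j then (1/2) ^ j else 0)"

text \<open>Characters are constant on small cylinders and cancel out by the flip symmetry on large ones.\<close>
lemma integral_chr_cylinder:
  assumes "q \<in> Lambda"
  shows "(\<integral>a. chr q a * indicator (cylinder x j) a \<partial>haar) = chr q x * chr_cylinder_mass q j"
proof (cases "lam_exp q \<le> j")
  case True
  then have "(\<lambda>a. chr q a * indicator (cylinder x j) a) = (\<lambda>a. chr q x * of_real (indicator (cylinder x j) a))"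
    by (auto simp: indicator_def cylinder_def fun_eq_iff intro!: chr_cong)
  then show ?thesis using True by (simp add: measure_cylinder chr_cylinder_mass_def)
next
  case False
  then have "q \<noteq> 0" by (metis le0 lam_exp_0)
  define g where "g = (\<lambda>a. chr q a * indicator (cylinder x j) a)"
  have "flip_digit (lam_exp q - 1) a \<in> cylinder x j \<longleftrightarrow> a \<in> cylinder x j" for a
    using False by (simp add: cylinder_def)
  then have "g (flip_digit (lam_exp q - 1) a) = - g a" for a
    using chr_flip_digit[OF assms \<open>q \<noteq> 0\<close>] by (simp add: g_def indicator_def)
  moreover have "g \<in> borel_measurable haar" unfolding g_def by measurable
  ultimately have "integral\<^sup>L haar g = - integral\<^sup>L haar g"
    using integral_flip_digit[of g "lam_exp q - 1"] by simp
  then show ?thesis using False by (simp add: g_def chr_cylinder_mass_def)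
qed

lemma integral_chr_sphere:
  assumes "q \<in> Lambda"
  shows "(\<integral>a. chr q a * indicator (z2_sphere x j) a \<partial>haar)
    = chr q x * of_real (chr_cylinder_mass q j - chr_cylinder_mass q (Suc j))"
proof -
  have "integrable haar (\<lambda>a. chr q a * indicator (cylinder x n) a)" for n
    by (rule haar.integrable_const_bound[where B=1]) (auto simp: indicator_def)
  moreover have "(\<lambda>a. chr q a * indicator (z2_sphere x j) a)
      = (\<lambda>a. chr q a * indicator (cylinder x j) a - chr q a * indicator (cylinder x (Suc j)) a)"
    by (simp add: fun_eq_iff indicator_z2_sphere[where 'b=complex] algebra_simps)
  ultimately have "(\<integral>a. chr q a * indicator (z2_sphere x j) a \<partial>haar)
      = (\<integral>a. chr q a * indicator (cylinder x j) a \<partial>haar)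
        - (\<integral>a. chr q a * indicator (cylinder x (Suc j)) a \<partial>haar)"
    by simp
  then show ?thesis
    using assms by (simp add: integral_chr_cylinder algebra_simps)
qed

definition riesz_rate :: "real \<Rightarrow> real" where
  "riesz_rate \<beta> = 2 powr (- \<beta>)"

definition riesz_symbol :: "real \<Rightarrow> nat \<Rightarrow> real" where
  "riesz_symbol \<beta> n = (if n = 0 then 1 else (2 - 2 powr \<beta>) * riesz_rate \<beta> ^ n)"

lemma riesz_rate_bounds: "0 < \<beta> \<Longrightarrow> 0 < riesz_rate \<beta> \<and> riesz_rate \<beta> < 1"
  by (simp add: riesz_rate_def powr_less_one)

lemma riesz_level_nonneg: "0 \<le> \<beta> \<Longrightarrow> 0 \<le> riesz_level \<beta> j"
  using ge_one_powr_ge_zero[of 2 \<beta>] unfolding riesz_level_def zeta2_def powr_minus_divide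
  by (intro mult_nonneg_nonneg) (auto simp: field_simps)

lemma riesz_level_mult_half_power:
  "riesz_level \<beta> j * (1/2) ^ j = 2 * (1 - riesz_rate \<beta>) * riesz_rate \<beta> ^ j"
proof -
  have "(1/2::real) ^ j = 2 powr (- real j)"
    by (simp add: powr_minus powr_realpow power_one_over inverse_eq_divide)
  then have "((1/2::real) ^ j) powr (\<beta> - 1) * (1/2) ^ j = 2 powr (- real j * (\<beta> - 1)) * 2 powr (- real j)"
    by (simp add: powr_powr)
  also have "\<dots> = 2 powr (- \<beta> * real j)"
    by (simp add: powr_add[symmetric] algebra_simps)
  also have "\<dots> = riesz_rate \<beta> ^ j"
    by (simp add: riesz_rate_def powr_realpow[symmetric] powr_powr)
  finally show ?thesis
    by (simp add: riesz_level_def zeta2_def riesz_rate_def mult.assoc)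
qed

lemma sums_geometric_tail:
  fixes r c :: real
  assumes "\<bar>r\<bar> < 1"
  shows "(\<lambda>j. if n \<le> j then c * (1 - r) * r ^ j else 0) sums (c * r ^ n)"
proof -
  define f where "f = (\<lambda>j. if n \<le> j then c * (1 - r) * r ^ j else 0)"
  have "r \<noteq> 1" using assms by auto
  have "(\<lambda>i. c * (1 - r) * r ^ n * r ^ i) sums (c * (1 - r) * r ^ n * (1 / (1 - r)))"
    using assms by (intro sums_mult geometric_sums) simp
  moreover have "c * (1 - r) * r ^ n * (1 / (1 - r)) = c * r ^ n"
    using \<open>r \<noteq> 1\<close> by simp
  moreover have "(\<lambda>i. f (i + n)) = (\<lambda>i. c * (1 - r) * r ^ n * r ^ i)"
    by (simp add: f_def fun_eq_iff power_add mult_ac)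
  ultimately have "(\<lambda>i. f (i + n)) sums (c * r ^ n)"
    by simp
  moreover have "sum f {..<n} = 0" by (simp add: f_def)
  ultimately show ?thesis using sums_iff_shift[of f n] by (simp add: f_def)
qed

lemma riesz_symbol_sums:
  assumes "0 < \<beta>"
  shows "(\<lambda>j. riesz_level \<beta> j * (chr_cylinder_mass q j - chr_cylinder_mass q (Suc j)))
    sums riesz_symbol \<beta> (lam_exp q)"
proof -
  define n r where "n = lam_exp q" and "r = riesz_rate \<beta>"
  have r: "\<bar>r\<bar> < 1" using riesz_rate_bounds[OF assms] by (simp add: r_def)
  have "(\<lambda>j. riesz_level \<beta> j * chr_cylinder_mass q j) = (\<lambda>j. if n \<le> j then 2 * (1 - r) * r ^ j else 0)"
    by (simp add: fun_eq_iff chr_cylinder_mass_def riesz_level_mult_half_power n_def r_def)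
  then have s1: "(\<lambda>j. riesz_level \<beta> j * chr_cylinder_mass q j) sums (2 * r ^ n)"
    using sums_geometric_tail[OF r] by simp
  have "(\<lambda>j. riesz_level \<beta> j * chr_cylinder_mass q (Suc j))
      = (\<lambda>j. if n - 1 \<le> j then 1 * (1 - r) * r ^ j else 0)"
    using riesz_level_mult_half_power[of \<beta>]
    by (auto simp: fun_eq_iff chr_cylinder_mass_def n_def r_def)
  then have s2: "(\<lambda>j. riesz_level \<beta> j * chr_cylinder_mass q (Suc j)) sums (1 * r ^ (n - 1))"
    using sums_geometric_tail[OF r, of "n - 1" 1] by simp
  have "2 * r ^ n - r ^ (n - 1) = riesz_symbol \<beta> n"
  proof (cases "n = 0")
    case False
    have "r * 2 powr \<beta> = 1" by (simp add: r_def riesz_rate_def powr_add[symmetric])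
    then have "r ^ (n - 1) = r ^ n * 2 powr \<beta>"
      using False by (metis Suc_pred' bot_nat_0.not_eq_extremum mult.assoc mult_1_right power_Suc2)
    then show ?thesis using False by (simp add: riesz_symbol_def r_def algebra_simps)
  qed (simp add: riesz_symbol_def)
  then show ?thesis
    using sums_diff[OF s1 s2] by (simp add: n_def right_diff_distrib)
qed

lemma integral_chr_riesz_level_sphere:
  assumes "q \<in> Lambda"
  shows "(\<integral>a. chr q a * of_real (riesz_level \<beta> j * indicator (z2_sphere x j) a) \<partial>haar)
    = chr q x * of_real (riesz_level \<beta> j * (chr_cylinder_mass q j - chr_cylinder_mass q (Suc j)))"
proof -
  have "(\<lambda>a. chr q a * of_real (riesz_level \<beta> j * indicator (z2_sphere x j) a))
      = (\<lambda>a. of_real (riesz_level \<beta> j) * (chr q a * indicator (z2_sphere x j) a))"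
    by (simp add: fun_eq_iff indicator_def)
  then have "(\<integral>a. chr q a * of_real (riesz_level \<beta> j * indicator (z2_sphere x j) a) \<partial>haar)
      = of_real (riesz_level \<beta> j) * (\<integral>a. chr q a * indicator (z2_sphere x j) a \<partial>haar)"
    by simp
  also have "\<dots> = chr q x * of_real (riesz_level \<beta> j * (chr_cylinder_mass q j - chr_cylinder_mass q (Suc j)))"
    using assms by (simp add: integral_chr_sphere algebra_simps)
  finally show ?thesis .
qed

text \<open>The kernel is integrated sphere by sphere, where it is constant.\<close>
lemma integral_chr_riesz_kernel:
  assumes q: "q \<in> Lambda" and \<beta>: "0 < \<beta>"
  shows "integrable haar (\<lambda>a. chr q a * of_real (riesz_kernel \<beta> (z2_sub a x)))"
    and "(\<integral>a. chr q a * of_real (riesz_kernel \<beta> (z2_sub a x)) \<partial>haar)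
      = chr q x * of_real (riesz_symbol \<beta> (lam_exp q))"
proof -
  define f where "f j a = chr q a * of_real (riesz_level \<beta> j * indicator (z2_sphere x j) a)" for j a
  have level: "0 \<le> riesz_level \<beta> j" for j using \<beta> by (simp add: riesz_level_nonneg)
  have norm_f: "norm (f j a) = riesz_level \<beta> j * indicator (z2_sphere x j) a" for j a
    using level by (simp add: f_def norm_mult)
  have "f j \<in> borel_measurable haar" for j
    unfolding f_def by measurable
  then have f_int: "integrable haar (f j)" for j
    by (intro haar.integrable_const_bound[where B="riesz_level \<beta> j"])
       (auto simp: norm_f indicator_def level)
  have summable_norm: "AE a in haar. summable (\<lambda>j. norm (f j a))"
    unfolding norm_f using riesz_kernel_sums sums_summable by blast
  have summable_integral: "summable (\<lambda>j. (\<integral>a. norm (f j a) \<partial>haar))"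
  proof -
    have "(\<integral>a. norm (f j a) \<partial>haar) = (1 - riesz_rate \<beta>) * riesz_rate \<beta> ^ j" for j
      using riesz_level_mult_half_power[of \<beta> j] by (simp add: norm_f measure_z2_sphere)
    moreover have "\<bar>riesz_rate \<beta>\<bar> < 1" using riesz_rate_bounds[OF \<beta>] by simp
    ultimately show ?thesis by (simp add: summable_mult summable_geometric)
  qed
  have suminf_f: "(\<Sum>j. f j a) = chr q a * of_real (riesz_kernel \<beta> (z2_sub a x))" for a
    unfolding f_def by (intro sums_unique[symmetric] sums_mult sums_of_real riesz_kernel_sums)
  have "(\<lambda>j. integral\<^sup>L haar (f j)) sums (chr q x * of_real (riesz_symbol \<beta> (lam_exp q)))"
    unfolding f_def integral_chr_riesz_level_sphere[OF q]
    by (intro sums_mult sums_of_real riesz_symbol_sums[OF \<beta>])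
  moreover have "(\<integral>a. (\<Sum>j. f j a) \<partial>haar) = (\<Sum>j. integral\<^sup>L haar (f j))"
    by (rule integral_suminf[OF f_int summable_norm summable_integral])
  ultimately show "(\<integral>a. chr q a * of_real (riesz_kernel \<beta> (z2_sub a x)) \<partial>haar)
      = chr q x * of_real (riesz_symbol \<beta> (lam_exp q))"
    by (simp add: suminf_f sums_iff)
  have "integrable haar (\<lambda>a. \<Sum>j. f j a)"
    by (rule integrable_suminf[OF f_int summable_norm summable_integral])
  then show "integrable haar (\<lambda>a. chr q a * of_real (riesz_kernel \<beta> (z2_sub a x)))"
    by (simp add: suminf_f)
qed

section \<open>The Riesz operator on the Fourier side\<close>

definition truncate_digits :: "nat \<Rightarrow> Z2 \<Rightarrow> Z2" where
  "truncate_digits N x = (\<lambda>i. i < N \<and> x i)"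

lemma finite_range_truncate_digits: "finite (range (truncate_digits N))"
proof -
  have "inj_on (\<lambda>g. {i. g i}) (range (truncate_digits N))"
    by (rule inj_onI) (auto simp: truncate_digits_def fun_eq_iff)
  moreover have "(\<lambda>g. {i. g i}) ` range (truncate_digits N) \<subseteq> Pow {..<N}"
    by (auto simp: truncate_digits_def)
  ultimately show ?thesis
    by (meson finite_Pow_iff finite_lessThan finite_subset inj_on_finite)
qed

lemma indicator_cylinder_truncate_digits:
  "indicator (cylinder (truncate_digits N y) N) x = (if truncate_digits N y = truncate_digits N x then 1 else 0)"
  by (auto simp: indicator_def cylinder_def truncate_digits_def fun_eq_iff)

text \<open>A locally constant function is a finite linear combination of indicators of cylinders.\<close>
lemma locally_constant_bounded_measurable:
  fixes f :: "Z2 \<Rightarrow> 'b::{banach, second_countable_topology}"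
  assumes "locally_constant f"
  obtains B where "\<And>x. norm (f x) \<le> B" and "f \<in> borel_measurable haar"
proof -
  obtain N where N: "\<And>x y. (\<forall>i<N. x i = y i) \<Longrightarrow> f x = f y"
    using locally_constant_uniform[OF assms] by blast
  let ?G = "range (truncate_digits N)"
  have f_trunc: "f x = f (truncate_digits N x)" for x by (rule N) (simp add: truncate_digits_def)
  have fin: "finite ?G" by (rule finite_range_truncate_digits)
  have bound: "norm (f x) \<le> Max ((\<lambda>g. norm (f g)) ` ?G)" for x
    using fin by (subst f_trunc) (intro Max_ge, auto)
  have "f x = (\<Sum>g\<in>?G. indicator (cylinder g N) x *\<^sub>R f g)" for x
  proof -
    have "(\<Sum>g\<in>?G. indicator (cylinder g N) x *\<^sub>R f g) = (\<Sum>g\<in>?G. if g = truncate_digits N x then f g else 0)"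
      by (intro sum.cong) (auto simp: indicator_cylinder_truncate_digits)
    also have "\<dots> = f x" using fin f_trunc[of x] by (simp add: sum.delta')
    finally show ?thesis by simp
  qed
  then have "f = (\<lambda>x. \<Sum>g\<in>?G. indicator (cylinder g N) x *\<^sub>R f g)" by blast
  moreover have "(\<lambda>x. \<Sum>g\<in>?G. indicator (cylinder g N) x *\<^sub>R f g) \<in> borel_measurable haar"
    by measurable
  ultimately have "f \<in> borel_measurable haar" by simp
  with bound show ?thesis using that by blast
qed

lemma riesz_kernel_nonneg: "0 \<le> \<beta> \<Longrightarrow> 0 \<le> riesz_kernel \<beta> y"
  using ge_one_powr_ge_zero[of 2 \<beta>] unfolding riesz_kernel_def zeta2_def powr_minus_divide
  by (intro mult_nonneg_nonneg) (auto simp: field_simps)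

lemma Lambda_0: "0 \<in> Lambda"
  by (auto simp: Lambda_def intro!: exI[of _ 0])

lemma riesz_kernel_probability_density:
  assumes "0 < \<beta>"
  shows "integrable haar (\<lambda>a. riesz_kernel \<beta> (z2_sub a x))"
    and "(\<integral>a. riesz_kernel \<beta> (z2_sub a x) \<partial>haar) = 1"
proof -
  have "integrable haar (\<lambda>a. complex_of_real (riesz_kernel \<beta> (z2_sub a x)))"
    using integral_chr_riesz_kernel(1)[OF Lambda_0 assms, of x] by simp
  from integrable_Re[OF this] show "integrable haar (\<lambda>a. riesz_kernel \<beta> (z2_sub a x))"
    by simp
  have "(\<integral>a. complex_of_real (riesz_kernel \<beta> (z2_sub a x)) \<partial>haar) = 1"
    using integral_chr_riesz_kernel(2)[OF Lambda_0 assms, of x] by (simp add: riesz_symbol_def)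
  then show "(\<integral>a. riesz_kernel \<beta> (z2_sub a x) \<partial>haar) = 1"
    by simp
qed

lemma integrable_pair_unit_kernel:
  fixes k :: "Z2 \<Rightarrow> Z2 \<Rightarrow> real"
  assumes measurable: "(\<lambda>p. k (fst p) (snd p)) \<in> borel_measurable (haar \<Otimes>\<^sub>M haar)"
    and nonneg: "\<And>a x. 0 \<le> k a x"
    and integrable: "\<And>x. integrable haar (\<lambda>a. k a x)"
    and unit: "\<And>x. (\<integral>a. k a x \<partial>haar) = 1"
  shows "integrable (haar \<Otimes>\<^sub>M haar) (\<lambda>p. k (fst p) (snd p))"
proof (rule integrableI_nonneg)
  have "(\<integral>\<^sup>+a. ennreal (k a x) \<partial>haar) = 1" for x
    using nn_integral_eq_integral[OF integrable] nonneg unit by simp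
  then have "(\<integral>\<^sup>+p. ennreal (k (fst p) (snd p)) \<partial>(haar \<Otimes>\<^sub>M haar)) = 1"
    using haar2.nn_integral_snd[of "\<lambda>p. ennreal (k (fst p) (snd p))"] measurable
      haar.emeasure_space_1
    by simp
  then show "(\<integral>\<^sup>+p. ennreal (k (fst p) (snd p)) \<partial>(haar \<Otimes>\<^sub>M haar)) < \<infinity>"
    by simp
qed (use measurable nonneg in simp_all)

lemma integrable_riesz_kernel_times_bounded:
  fixes g :: "Z2 \<times> Z2 \<Rightarrow> complex"
  assumes \<beta>: "0 < \<beta>" and g: "g \<in> borel_measurable (haar \<Otimes>\<^sub>M haar)" and B: "\<And>p. norm (g p) \<le> B"
  shows "integrable (haar \<Otimes>\<^sub>M haar) (\<lambda>p. of_real (riesz_kernel \<beta> (z2_sub (fst p) (snd p))) * g p)"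
proof (rule Bochner_Integration.integrable_bound)
  define k where "k a x = riesz_kernel \<beta> (z2_sub a x)" for a x
  have k_meas: "(\<lambda>p. k (fst p) (snd p)) \<in> borel_measurable (haar \<Otimes>\<^sub>M haar)"
    unfolding k_def by (rule measurable_riesz_kernel_pair)
  have k_nonneg: "0 \<le> k a x" for a x
    unfolding k_def using \<beta> by (simp add: riesz_kernel_nonneg)
  show "integrable (haar \<Otimes>\<^sub>M haar) (\<lambda>p. B * k (fst p) (snd p))"
    using integrable_pair_unit_kernel[OF k_meas k_nonneg] riesz_kernel_probability_density[OF \<beta>]
    by (simp add: k_def)
  show "(\<lambda>p. of_real (riesz_kernel \<beta> (z2_sub (fst p) (snd p))) * g p) \<in> borel_measurable (haar \<Otimes>\<^sub>M haar)"
    using k_meas g unfolding k_def by measurable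
  have "norm (of_real (k (fst p) (snd p)) * g p) \<le> norm (B * k (fst p) (snd p))" for p
  proof -
    have "norm (of_real (k (fst p) (snd p)) * g p) = k (fst p) (snd p) * norm (g p)"
      using k_nonneg by (simp add: norm_mult)
    also have "\<dots> \<le> k (fst p) (snd p) * B" using B k_nonneg by (rule mult_left_mono)
    finally show ?thesis using k_nonneg order_trans[OF norm_ge_zero B] by (simp add: mult.commute)
  qed
  then show "AE p in haar \<Otimes>\<^sub>M haar.
      norm (of_real (riesz_kernel \<beta> (z2_sub (fst p) (snd p))) * g p) \<le> norm (B * k (fst p) (snd p))"
    by (simp add: k_def)
qed

theorem fourier_conv_riesz_kernel:
  assumes f: "locally_constant f" and q: "q \<in> Lambda" and \<beta>: "0 < \<beta>"
  shows "fourier (conv (riesz_kernel \<beta>) f) q = of_real (riesz_symbol \<beta> (lam_exp q)) * fourier f q"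
proof -
  obtain B where B: "\<And>x. norm (f x) \<le> B" and f_meas: "f \<in> borel_measurable haar"
    using locally_constant_bounded_measurable[OF f] by blast
  define h where "h a x = of_real (riesz_kernel \<beta> (z2_sub a x)) * (chr q a * f x)" for a x
  have "integrable (haar \<Otimes>\<^sub>M haar) (\<lambda>p. h (fst p) (snd p))"
    unfolding h_def using f_meas B
    by (intro integrable_riesz_kernel_times_bounded[OF \<beta>, where B=B]) (measurable, auto simp: norm_mult)
  then have Fubini: "(\<integral>x. (\<integral>a. h a x \<partial>haar) \<partial>haar) = (\<integral>a. (\<integral>x. h a x \<partial>haar) \<partial>haar)"
    by (intro haar2.Fubini_integral) (simp add: split_beta')
  have "chr q a * conv (riesz_kernel \<beta>) f a = (\<integral>x. h a x \<partial>haar)" for a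
    unfolding conv_def h_def by (subst integral_mult_right_zero[symmetric]) (simp add: mult_ac)
  then have "fourier (conv (riesz_kernel \<beta>) f) q = (\<integral>a. (\<integral>x. h a x \<partial>haar) \<partial>haar)"
    using q by (simp add: fourier_def)
  also have "\<dots> = (\<integral>x. (\<integral>a. h a x \<partial>haar) \<partial>haar)"
    by (rule Fubini[symmetric])
  also have "\<dots> = (\<integral>x. of_real (riesz_symbol \<beta> (lam_exp q)) * (chr q x * f x) \<partial>haar)"
  proof -
    have "(\<integral>a. h a x \<partial>haar) = (\<integral>a. chr q a * of_real (riesz_kernel \<beta> (z2_sub a x)) \<partial>haar) * f x" for x
      unfolding h_def by (simp add: mult_ac)
    then show ?thesis
      using integral_chr_riesz_kernel(2)[OF q \<beta>] by (simp add: mult_ac)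
  qed
  also have "\<dots> = of_real (riesz_symbol \<beta> (lam_exp q)) * fourier f q"
    using q by (simp add: fourier_def)
  finally show ?thesis .
qed

section \<open>Fourier multipliers between Sobolev spaces\<close>

definition sobolev_weight :: "real \<Rightarrow> rat \<Rightarrow> real" where
  "sobolev_weight t q = (1 + lam_abs q) powr (2 * t)"

lemma lam_abs_nonneg: "0 \<le> lam_abs q"
  unfolding lam_abs_def using quotient_of_denom_pos'[of q] by simp

lemma sobolev_weight_pos: "0 < sobolev_weight t q"
  unfolding sobolev_weight_def using lam_abs_nonneg[of q] by simp

lemma H_space_iff: "c \<in> H_space t \<longleftrightarrow> (\<forall>q. q \<notin> Lambda \<longrightarrow> c q = 0) \<and>
    (\<lambda>q. sobolev_weight t q * (cmod (c q))\<^sup>2) summable_on Lambda"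
  by (simp add: H_space_def sobolev_weight_def)

lemma H_norm_eq: "H_norm t c = sqrt (\<Sum>\<^sub>\<infinity>q\<in>Lambda. sobolev_weight t q * (cmod (c q))\<^sup>2)"
  by (simp add: H_norm_def sobolev_weight_def)

lemma H_space_diff:
  assumes "c \<in> H_space t" "d \<in> H_space t"
  shows "(\<lambda>q. d q - c q) \<in> H_space t"
proof -
  have "(\<lambda>q. 2 * (sobolev_weight t q * (cmod (d q))\<^sup>2) + 2 * (sobolev_weight t q * (cmod (c q))\<^sup>2))
      summable_on Lambda"
    using assms by (intro summable_on_add summable_on_cmult_right) (auto simp: H_space_iff)
  then have "(\<lambda>q. sobolev_weight t q * (cmod (d q - c q))\<^sup>2) summable_on Lambda"
  proof (rule summable_on_comparison_test)
    fix q
    have "(cmod (d q - c q))\<^sup>2 \<le> (cmod (d q) + cmod (c q))\<^sup>2"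
      by (simp add: norm_triangle_ineq4 power_mono)
    also have "\<dots> \<le> 2 * (cmod (d q))\<^sup>2 + 2 * (cmod (c q))\<^sup>2"
      using sum_squares_ge_zero[of "cmod (d q) - cmod (c q)" 0] by (simp add: power2_eq_square algebra_simps)
    finally have "sobolev_weight t q * (cmod (d q - c q))\<^sup>2
        \<le> sobolev_weight t q * (2 * (cmod (d q))\<^sup>2 + 2 * (cmod (c q))\<^sup>2)"
      using sobolev_weight_pos[of t q] by (intro mult_left_mono) simp_all
    then show "sobolev_weight t q * (cmod (d q - c q))\<^sup>2
        \<le> 2 * (sobolev_weight t q * (cmod (d q))\<^sup>2) + 2 * (sobolev_weight t q * (cmod (c q))\<^sup>2)"
      by (simp add: algebra_simps)
  qed (simp add: sobolev_weight_pos less_imp_le)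
  then show ?thesis using assms by (auto simp: H_space_iff)
qed

definition multiplier_op :: "(rat \<Rightarrow> real) \<Rightarrow> (rat \<Rightarrow> complex) \<Rightarrow> rat \<Rightarrow> complex" where
  "multiplier_op m c q = of_real (m q) * c q"

locale sobolev_multiplier =
  fixes m :: "rat \<Rightarrow> real" and t u c1 c2 :: real
  assumes c1_pos: "0 < c1"
    and upper: "\<And>q. q \<in> Lambda \<Longrightarrow> sobolev_weight u q * (m q)\<^sup>2 \<le> c2 * sobolev_weight t q"
    and lower: "\<And>q. q \<in> Lambda \<Longrightarrow> c1 * sobolev_weight t q \<le> sobolev_weight u q * (m q)\<^sup>2"
begin

lemma c2_pos: "0 < c2"
  using upper[OF Lambda_0] lower[OF Lambda_0] c1_pos sobolev_weight_pos[of t 0]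
  by (smt (verit, best) mult_less_cancel_right)

lemma weighted_multiplier_le:
  "q \<in> Lambda \<Longrightarrow> sobolev_weight u q * (cmod (multiplier_op m c q))\<^sup>2
    \<le> c2 * (sobolev_weight t q * (cmod (c q))\<^sup>2)"
  using upper[of q] by (simp add: multiplier_op_def norm_mult power_mult_distrib mult.assoc[symmetric]
      mult_right_mono)

lemma multiplier_op_mem:
  assumes "c \<in> H_space t"
  shows "multiplier_op m c \<in> H_space u"
proof -
  have "(\<lambda>q. c2 * (sobolev_weight t q * (cmod (c q))\<^sup>2)) summable_on Lambda"
    using assms by (intro summable_on_cmult_right) (simp add: H_space_iff)
  then have "(\<lambda>q. sobolev_weight u q * (cmod (multiplier_op m c q))\<^sup>2) summable_on Lambda"
    by (rule summable_on_comparison_test) (auto simp: weighted_multiplier_le sobolev_weight_pos less_imp_le)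
  then show ?thesis using assms by (auto simp: H_space_iff multiplier_op_def)
qed

lemma H_norm_multiplier_op:
  assumes "c \<in> H_space t"
  shows "H_norm u (multiplier_op m c) \<le> sqrt c2 * H_norm t c"
proof -
  have sc: "(\<lambda>q. sobolev_weight t q * (cmod (c q))\<^sup>2) summable_on Lambda"
    using assms by (simp add: H_space_iff)
  have "(\<Sum>\<^sub>\<infinity>q\<in>Lambda. sobolev_weight u q * (cmod (multiplier_op m c q))\<^sup>2)
      \<le> (\<Sum>\<^sub>\<infinity>q\<in>Lambda. c2 * (sobolev_weight t q * (cmod (c q))\<^sup>2))"
    using multiplier_op_mem[OF assms] sc
    by (intro infsum_mono summable_on_cmult_right weighted_multiplier_le) (simp_all add: H_space_iff)
  also have "\<dots> = c2 * (\<Sum>\<^sub>\<infinity>q\<in>Lambda. sobolev_weight t q * (cmod (c q))\<^sup>2)"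
    by (rule infsum_cmult_right) (use sc in simp)
  finally show ?thesis
    unfolding H_norm_eq by (metis real_sqrt_le_mono real_sqrt_mult)
qed

lemma multiplier_op_continuous:
  assumes "c \<in> H_space t" "0 < \<epsilon>"
  shows "\<exists>\<delta>>0. \<forall>d\<in>H_space t. H_norm t (\<lambda>q. d q - c q) < \<delta>
    \<longrightarrow> H_norm u (\<lambda>q. multiplier_op m d q - multiplier_op m c q) < \<epsilon>"
proof (intro exI conjI ballI impI)
  show "0 < \<epsilon> / sqrt c2" using assms(2) c2_pos by simp
  fix d assume d: "d \<in> H_space t" and close: "H_norm t (\<lambda>q. d q - c q) < \<epsilon> / sqrt c2"
  have "(\<lambda>q. multiplier_op m d q - multiplier_op m c q) = multiplier_op m (\<lambda>q. d q - c q)"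
    by (simp add: multiplier_op_def fun_eq_iff algebra_simps)
  then have "H_norm u (\<lambda>q. multiplier_op m d q - multiplier_op m c q) \<le> sqrt c2 * H_norm t (\<lambda>q. d q - c q)"
    using H_norm_multiplier_op[OF H_space_diff[OF assms(1) d]] by simp
  also have "\<dots> < \<epsilon>"
    using close c2_pos by (simp add: field_simps)
  finally show "H_norm u (\<lambda>q. multiplier_op m d q - multiplier_op m c q) < \<epsilon>" .
qed

lemma multiplier_op_surj: "multiplier_op m ` H_space t = H_space u"
proof
  show "multiplier_op m ` H_space t \<subseteq> H_space u" using multiplier_op_mem by blast
  show "H_space u \<subseteq> multiplier_op m ` H_space t"
  proof
    fix e assume e: "e \<in> H_space u"
    have m_nonzero: "m q \<noteq> 0" if "q \<in> Lambda" for q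
      using lower[OF that] mult_pos_pos[OF c1_pos sobolev_weight_pos[of t q]] by auto
    define c where "c q = (if q \<in> Lambda then e q / of_real (m q) else 0)" for q
    have "multiplier_op m c = e"
      using e m_nonzero by (auto simp: fun_eq_iff multiplier_op_def c_def H_space_iff)
    moreover have "(\<lambda>q. (1 / c1) * (sobolev_weight u q * (cmod (e q))\<^sup>2)) summable_on Lambda"
      using e by (intro summable_on_cmult_right) (simp add: H_space_iff)
    then have "(\<lambda>q. sobolev_weight t q * (cmod (c q))\<^sup>2) summable_on Lambda"
    proof (rule summable_on_comparison_test)
      fix q assume q: "q \<in> Lambda"
      have "sobolev_weight t q \<le> sobolev_weight u q * (m q)\<^sup>2 / c1"
        using lower[OF q] c1_pos by (simp add: field_simps)
      then have "sobolev_weight t q * (cmod (c q))\<^sup>2 \<le> sobolev_weight u q * (m q)\<^sup>2 / c1 * (cmod (c q))\<^sup>2"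
        by (rule mult_right_mono) simp
      also have "\<dots> = (1 / c1) * (sobolev_weight u q * (cmod (e q))\<^sup>2)"
        using q m_nonzero[OF q] by (simp add: c_def norm_divide power_divide)
      finally show "sobolev_weight t q * (cmod (c q))\<^sup>2 \<le> (1 / c1) * (sobolev_weight u q * (cmod (e q))\<^sup>2)" .
    qed (simp add: sobolev_weight_pos less_imp_le)
    then have "c \<in> H_space t" by (auto simp: H_space_iff c_def)
    ultimately show "e \<in> multiplier_op m ` H_space t" by blast
  qed
qed

end

lemma riesz_symbol_lam_abs:
  assumes "q \<in> Lambda" "q \<noteq> 0"
  shows "riesz_symbol \<beta> (lam_exp q) = (2 - 2 powr \<beta>) * lam_abs q powr (- \<beta>)"
proof -
  obtain k where "0 < lam_exp q" using assms by (rule Lambda_odd_numerator)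
  moreover have "lam_abs q powr (- \<beta>) = riesz_rate \<beta> ^ lam_exp q"
    by (simp add: lam_abs_eq_power[OF assms] riesz_rate_def powr_realpow[symmetric] powr_powr mult.commute)
  ultimately show ?thesis by (simp add: riesz_symbol_def)
qed

text \<open>The symbol is a multiple of |q|^(-\<beta>), and |q| \<le> 1 + |q| \<le> 2|q|.\<close>
lemma riesz_symbol_weight_bounds:
  assumes \<beta>: "0 \<le> \<beta>" and q: "q \<in> Lambda" "q \<noteq> 0"
  defines "C \<equiv> 2 - 2 powr \<beta>"
  shows "sobolev_weight (\<beta>/2) q * (riesz_symbol \<beta> (lam_exp q))\<^sup>2
      \<le> (2 powr \<beta> * C)\<^sup>2 * sobolev_weight (- (\<beta>/2)) q"
    and "C\<^sup>2 * sobolev_weight (- (\<beta>/2)) q \<le> sobolev_weight (\<beta>/2) q * (riesz_symbol \<beta> (lam_exp q))\<^sup>2"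
proof -
  define A where "A = lam_abs q"
  have A: "1 \<le> A" using lam_abs_eq_power[OF q] by (simp add: A_def)
  define u v where "u = (1 + A) powr \<beta>" and "v = A powr \<beta>"
  have uv: "0 < v" "v \<le> u" "u \<le> 2 powr \<beta> * v"
    using A \<beta> powr_mono2[of \<beta> "1 + A" "2 * A"] powr_mono2[of \<beta> A "1 + A"]
    by (auto simp: u_def v_def powr_mult)
  have weights: "sobolev_weight (\<beta>/2) q = u" "sobolev_weight (- (\<beta>/2)) q = 1 / u"
    by (simp_all add: sobolev_weight_def u_def A_def powr_minus_divide)
  have symbol: "riesz_symbol \<beta> (lam_exp q) = C / v"
    using riesz_symbol_lam_abs[OF q] by (simp add: C_def v_def A_def powr_minus_divide)
  have "C\<^sup>2 * (u * u) \<le> C\<^sup>2 * ((2 powr \<beta> * v) * (2 powr \<beta> * v))"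
    using uv by (intro mult_left_mono mult_mono) auto
  then show "sobolev_weight (\<beta>/2) q * (riesz_symbol \<beta> (lam_exp q))\<^sup>2
      \<le> (2 powr \<beta> * C)\<^sup>2 * sobolev_weight (- (\<beta>/2)) q"
    unfolding weights symbol using uv by (simp add: field_simps power2_eq_square)
  have "C\<^sup>2 * (v * v) \<le> C\<^sup>2 * (u * u)"
    using uv by (intro mult_left_mono mult_mono) auto
  then show "C\<^sup>2 * sobolev_weight (- (\<beta>/2)) q \<le> sobolev_weight (\<beta>/2) q * (riesz_symbol \<beta> (lam_exp q))\<^sup>2"
    unfolding weights symbol using uv by (simp add: field_simps power2_eq_square)
qed

lemma sobolev_multiplier_riesz_symbol:
  assumes "0 < \<beta>" "\<beta> < 1"
  defines "C \<equiv> 2 - 2 powr \<beta>"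
  shows "sobolev_multiplier (\<lambda>q. riesz_symbol \<beta> (lam_exp q)) (- (\<beta>/2)) (\<beta>/2) (C\<^sup>2) (1 + (2 powr \<beta> * C)\<^sup>2)"
proof
  have "2 powr 0 < 2 powr \<beta>" "2 powr \<beta> < 2 powr 1"
    using assms by (intro powr_less_mono; simp)+
  then have C: "0 < C" "C < 1" by (auto simp: C_def)
  then show "0 < C\<^sup>2" by simp
  fix q assume q: "q \<in> Lambda"
  show "sobolev_weight (\<beta>/2) q * (riesz_symbol \<beta> (lam_exp q))\<^sup>2
      \<le> (1 + (2 powr \<beta> * C)\<^sup>2) * sobolev_weight (- (\<beta>/2)) q"
  proof (cases "q = 0")
    case False
    then show ?thesis
      using riesz_symbol_weight_bounds(1)[OF _ q False, of \<beta>] assms(1) sobolev_weight_pos[of "- (\<beta>/2)" q]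
      unfolding C_def by (smt (verit) mult_right_mono zero_le_power2)
  qed (simp add: sobolev_weight_def riesz_symbol_def lam_abs_def)
  show "C\<^sup>2 * sobolev_weight (- (\<beta>/2)) q \<le> sobolev_weight (\<beta>/2) q * (riesz_symbol \<beta> (lam_exp q))\<^sup>2"
  proof (cases "q = 0")
    case False
    then show ?thesis
      using riesz_symbol_weight_bounds(2)[OF _ q False, of \<beta>] assms(1) unfolding C_def by simp
  qed (use C in \<open>simp add: sobolev_weight_def riesz_symbol_def lam_abs_def power_le_one\<close>)
qed

theorem proposition4p1:
  fixes \<alpha> \<beta> s :: real
  assumes "1 < \<alpha>" and "\<alpha> < 2"
    and "\<beta> = 1 - log 2 \<alpha>" and "s = \<beta> / 2"
  shows "\<exists>T :: (rat \<Rightarrow> complex) \<Rightarrow> (rat \<Rightarrow> complex).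
     (\<forall>c\<in>H_space (- s). T c \<in> H_space s)
   \<and> (\<forall>c\<in>H_space (- s). \<forall>d\<in>H_space (- s). T (\<lambda>q. c q + d q) = (\<lambda>q. T c q + T d q))
   \<and> (\<forall>c\<in>H_space (- s). \<forall>a::complex. T (\<lambda>q. a * c q) = (\<lambda>q. a * T c q))
   \<and> (\<forall>c\<in>H_space (- s). \<forall>\<epsilon>>0. \<exists>\<delta>>0. \<forall>d\<in>H_space (- s).
        H_norm (- s) (\<lambda>q. d q - c q) < \<delta> \<longrightarrow> H_norm s (\<lambda>q. T d q - T c q) < \<epsilon>)
   \<and> (\<forall>f. locally_constant f \<longrightarrow> T (fourier f) = fourier (conv (riesz_kernel \<beta>) f))
   \<and> T ` H_space (- s) = H_space s"
proof -
  have "0 < \<beta>" "\<beta> < 1"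
    using assms(1-3) by (simp_all add: less_log_iff log_less_iff)
  then interpret sobolev_multiplier "\<lambda>q. riesz_symbol \<beta> (lam_exp q)" "- s" s
      "(2 - 2 powr \<beta>)\<^sup>2" "1 + (2 powr \<beta> * (2 - 2 powr \<beta>))\<^sup>2"
    unfolding assms(4) by (rule sobolev_multiplier_riesz_symbol)
  have "multiplier_op (\<lambda>q. riesz_symbol \<beta> (lam_exp q)) (fourier f) = fourier (conv (riesz_kernel \<beta>) f)"
    if "locally_constant f" for f
    using fourier_conv_riesz_kernel[OF that _ \<open>0 < \<beta>\<close>]
    by (auto simp: fun_eq_iff multiplier_op_def fourier_def)
  then show ?thesis
    using multiplier_op_mem multiplier_op_continuous multiplier_op_surj
    by (intro exI[of _ "multiplier_op (\<lambda>q. riesz_symbol \<beta> (lam_exp q))"])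
       (auto simp: multiplier_op_def fun_eq_iff algebra_simps)
qed

end
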